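(* Let $G=K_{s}^{t}$ with $2\leq t\leq s$ and $n=s+t$, and let $P_{D}(\lambda)=\det(\lambda I-D(G))$. If $s\geq t+1$, then $$P_{D}(\lambda)=(\lambda+1)^{s-t-1}(\lambda+2-\sqrt{2})^{t-1}(\lambda+2+\sqrt{2})^{t-1}\big[\lambda^{3}+(5-s-3t)\lambda^{2}+(6-4s-2t-st)\lambda+2-2s-st\big].$$ If $s=t$, then $$P_{D}(\lambda)=(\lambda+2-\sqrt{2})^{t-1}(\lambda+2+\sqrt{2})^{t-1}\big[\lambda^{2}+(4-4t)\lambda+2-2t-t^{2}\big].$$
   Context: $D(G)$ is the distance matrix of $G$. $K_{s}^{t}$ ($2\le t\le s$) denotes the graph on $n=s+t$ vertices obtained from the complete graph $K_s$ by attaching a pendant edge (a new vertex of degree 1) to each of $t$ distinct vertices of $K_s$. *)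

theory Defs
  imports "Jordan_Normal_Form.Determinant"
begin

text \<open>Vertices of K_s^t are 0..s+t-1: vertices 0..s-1 form the clique K_s, and for
 each i < t the vertex s+i is a pendant vertex attached to vertex i.\<close>
definition Kst_adj :: "nat \<Rightarrow> nat \<Rightarrow> nat \<Rightarrow> nat \<Rightarrow> bool" where
  "Kst_adj s t u v \<longleftrightarrow> u \<noteq> v \<and>
     ((u < s \<and> v < s) \<or> (u < t \<and> v = s + u) \<or> (v < t \<and> u = s + v))"

definition walk :: "(nat \<Rightarrow> nat \<Rightarrow> bool) \<Rightarrow> nat \<Rightarrow> nat \<Rightarrow> nat \<Rightarrow> bool" where
  "walk E u v k \<longleftrightarrow> (\<exists>p::nat list. length p = Suc k \<and> p ! 0 = u \<and> p ! k = v \<and>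
      (\<forall>i<k. E (p ! i) (p ! Suc i)))"

definition gdist :: "(nat \<Rightarrow> nat \<Rightarrow> bool) \<Rightarrow> nat \<Rightarrow> nat \<Rightarrow> nat" where
  "gdist E u v = (LEAST k. walk E u v k)"

definition dist_mat_Kst :: "nat \<Rightarrow> nat \<Rightarrow> real mat" where
  "dist_mat_Kst s t = mat (s + t) (s + t) (\<lambda>(i, j). real (gdist (Kst_adj s t) i j))"

definition PD_Kst :: "nat \<Rightarrow> nat \<Rightarrow> real \<Rightarrow> real" where
  "PD_Kst s t x = det (x \<cdot>\<^sub>m 1\<^sub>m (s + t) - dist_mat_Kst s t)"

end

theory Submission
  imports Defs "Jordan_Normal_Form.Char_Poly"
begin

(* Between distinct vertices of K_s^t the distance is [base u \<noteq> base v] + [u pendant] + [v pendant],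
   where base sends a pendant vertex to its clique neighbour. Hence x I - D = M - W V, where
   W V = 1 (1 + p)^T + p 1^T has rank 2 (p the indicator of the pendant vertices) and M pairs each
   clique vertex with its pendant into a block [[x+1, 1], [1, x+3]] of determinant x^2 + 4x + 2,
   with diagonal entries x + 1 on the remaining s - t clique vertices. The matrix determinant lemma
   gives det (x I - D) = det M * det (I_2 - V M^-1 W); here det M = (x+1)^(s-t) (x^2+4x+2)^t and
   the 2 x 2 determinant is the cubic divided by (x+1)(x^2+4x+2). This proves the formula away
   from the roots of (x+1)(x^2+4x+2), and by continuity everywhere. For s = t the cubic has the
   factor x + 1. *)

lemma det_four_block_mat_schur:
  fixes A :: "'a :: idom mat"
  assumes A: "A \<in> carrier_mat n n" and B: "B \<in> carrier_mat n m"
    and C: "C \<in> carrier_mat m n" and D: "D \<in> carrier_mat m m"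
    and Y: "Y \<in> carrier_mat n m" and AY: "A * Y = B"
  shows "det (four_block_mat A B C D) = det A * det (D - C * Y)"
proof -
  let ?E = "four_block_mat (1\<^sub>m n) (- Y) (0\<^sub>m m n) (1\<^sub>m m)"
  have E: "?E \<in> carrier_mat (n + m) (n + m)" using Y by auto
  have "four_block_mat A B C D * ?E
      = four_block_mat (A * 1\<^sub>m n + B * 0\<^sub>m m n) (A * - Y + B * 1\<^sub>m m)
          (C * 1\<^sub>m n + D * 0\<^sub>m m n) (C * - Y + D * 1\<^sub>m m)"
    using A B C D Y by (intro mult_four_block_mat) auto
  also have "\<dots> = four_block_mat A (0\<^sub>m n m) C (D - C * Y)"
    using A B C D Y AY by (simp add: add_uminus_minus_mat[symmetric] comm_add_mat[of "- (C * Y)" m m D])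
  finally have prod: "four_block_mat A B C D * ?E = four_block_mat A (0\<^sub>m n m) C (D - C * Y)" .
  have detE: "det ?E = 1"
    using Y by (subst det_four_block_mat_lower_left_zero[of _ n _ m]) auto
  have "det (four_block_mat A B C D) = det (four_block_mat A B C D * ?E)"
    using det_mult[OF four_block_carrier_mat[OF A D] E] detE by simp
  also have "\<dots> = det A * det (D - C * Y)"
    unfolding prod using A C D Y by (intro det_four_block_mat_upper_right_zero) auto
  finally show ?thesis .
qed

lemma det_minus_mult:
  fixes M :: "'a :: idom mat"
  assumes M: "M \<in> carrier_mat n n" and U: "U \<in> carrier_mat n k"
    and V: "V \<in> carrier_mat k n" and Y: "Y \<in> carrier_mat n k" and MY: "M * Y = U"
  shows "det (M - U * V) = det M * det (1\<^sub>m k - V * Y)"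
proof -
  let ?L = "four_block_mat (1\<^sub>m n) U (0\<^sub>m k n) (1\<^sub>m k)"
  let ?R = "four_block_mat (M - U * V) (0\<^sub>m n k) V (1\<^sub>m k)"
  have UV: "U * V \<in> carrier_mat n n" using U V by auto
  have "?L * ?R = four_block_mat (1\<^sub>m n * (M - U * V) + U * V) (1\<^sub>m n * 0\<^sub>m n k + U * 1\<^sub>m k)
      (0\<^sub>m k n * (M - U * V) + 1\<^sub>m k * V) (0\<^sub>m k n * 0\<^sub>m n k + 1\<^sub>m k * 1\<^sub>m k)"
    using M U V by (intro mult_four_block_mat) auto
  also have "\<dots> = four_block_mat M U V (1\<^sub>m k)"
    using M U V UV
    by (simp add: minus_add_uminus_mat[OF M UV] assoc_add_mat[of M n n] uminus_l_inv_mat[OF UV])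
  finally have LR: "?L * ?R = four_block_mat M U V (1\<^sub>m k)" .
  have "det (four_block_mat M U V (1\<^sub>m k)) = det (?L * ?R)" unfolding LR ..
  also have "\<dots> = det ?L * det ?R"
    using M U V by (intro det_mult[of _ "n + k"]) auto
  also have "det ?L = 1"
    using U by (subst det_four_block_mat_lower_left_zero[of _ n _ k]) auto
  also have "det ?R = det (M - U * V)"
    using M U V by (subst det_four_block_mat_upper_right_zero[of _ n _ k]) auto
  finally show ?thesis
    using det_four_block_mat_schur[OF M U V one_carrier_mat Y MY] by simp
qed

lemma det_mat_2:
  assumes "A \<in> carrier_mat 2 2"
  shows "det A = A $$ (0,0) * A $$ (1,1) - A $$ (0,1) * A $$ (1,0)"
proof -
  have "det A = (\<Sum>i<2. A $$ (i,0) * cofactor A i 0)"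
    using assms by (intro laplace_expansion_column) auto
  also have "\<dots> = A $$ (0,0) * cofactor A 0 0 + A $$ (1,0) * cofactor A 1 0"
    by (simp add: numeral_2_eq_2)
  also have "cofactor A 0 0 = A $$ (1,1)"
    unfolding cofactor_def using assms by (subst det_single) (auto simp: mat_delete_def numeral_2_eq_2)
  also have "cofactor A 1 0 = - A $$ (0,1)"
    unfolding cofactor_def using assms by (subst det_single) (auto simp: mat_delete_def numeral_2_eq_2)
  finally show ?thesis by (simp add: algebra_simps)
qed

lemma isCont_eq_off_finite:
  fixes f g :: "'a :: {perfect_space, t2_space} \<Rightarrow> 'b :: t2_space"
  assumes "finite S" and "\<And>y. y \<notin> S \<Longrightarrow> f y = g y"
    and "isCont f x" and "isCont g x"
  shows "f x = g x"
proof -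
  have "eventually (\<lambda>y. \<forall>a\<in>S. y \<noteq> a) (at x)"
    using assms(1) by (intro eventually_ball_finite) (auto intro: eventually_neq_at_within)
  then have "eventually (\<lambda>y. f y = g y) (at x)"
    by eventually_elim (use assms(2) in blast)
  with assms(3) have "(g \<longlongrightarrow> f x) (at x)"
    unfolding isCont_def by (rule Lim_transform_eventually)
  then show ?thesis
    using assms(4) unfolding isCont_def by (rule tendsto_unique[OF at_neq_bot])
qed

definition kst_base :: "nat \<Rightarrow> nat \<Rightarrow> nat" where
  "kst_base s u = (if u < s then u else u - s)"

definition kst_dist :: "nat \<Rightarrow> nat \<Rightarrow> nat \<Rightarrow> nat" where
  "kst_dist s u v = (if u = v then 0
     else of_bool (kst_base s u \<noteq> kst_base s v) + of_bool (s \<le> u) + of_bool (s \<le> v))"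

lemma walk_0_iff: "walk E u v 0 \<longleftrightarrow> u = v"
  unfolding walk_def by (auto intro: exI[of _ "[u]"])

lemma walk_snoc:
  assumes "walk E u v k" and "E v w"
  shows "walk E u w (Suc k)"
proof -
  obtain p where p: "length p = Suc k" "p ! 0 = u" "p ! k = v" "\<forall>i<k. E (p ! i) (p ! Suc i)"
    using assms(1) unfolding walk_def by blast
  show ?thesis unfolding walk_def
  proof (intro exI[of _ "p @ [w]"] conjI allI impI)
    fix i assume "i < Suc k"
    then show "E ((p @ [w]) ! i) ((p @ [w]) ! Suc i)"
      using p assms(2) by (cases "i < k") (auto simp: nth_append less_Suc_eq)
  qed (use p in \<open>auto simp: nth_append\<close>)
qed

lemma walk_edge: "E u v \<Longrightarrow> walk E u v (Suc 0)"
  using walk_snoc[of E u u 0] by (simp add: walk_0_iff)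

lemma walk_SucE:
  assumes "walk E u v (Suc k)"
  obtains w where "walk E u w k" and "E w v"
proof -
  obtain p where p: "length p = Suc (Suc k)" "p ! 0 = u" "p ! Suc k = v"
      "\<forall>i<Suc k. E (p ! i) (p ! Suc i)"
    using assms unfolding walk_def by blast
  have "walk E u (p ! k) k"
    unfolding walk_def by (rule exI[of _ "take (Suc k) p"]) (use p in auto)
  moreover have "E (p ! k) v" using p by auto
  ultimately show ?thesis by (rule that)
qed

lemma walk_trans: "walk E u w k \<Longrightarrow> walk E w v m \<Longrightarrow> walk E u v (k + m)"
proof (induction m arbitrary: v)
  case 0
  then show ?case by (simp add: walk_0_iff)
next
  case (Suc m)
  obtain w' where "walk E w w' m" "E w' v" using Suc.prems(2) by (rule walk_SucE)
  then show ?case using Suc.IH[OF Suc.prems(1)] walk_snoc by fastforce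
qed

lemma kst_dist_triangle: "kst_dist s u v \<le> kst_dist s u w + kst_dist s w v"
  by (auto simp: kst_dist_def)

lemma kst_dist_adj: "t \<le> s \<Longrightarrow> Kst_adj s t u v \<Longrightarrow> kst_dist s u v \<le> 1"
  by (auto simp: Kst_adj_def kst_dist_def kst_base_def)

lemma kst_dist_le_walk:
  assumes "t \<le> s" and "walk (Kst_adj s t) u v k"
  shows "kst_dist s u v \<le> k"
  using assms(2)
proof (induction k arbitrary: v)
  case 0
  then show ?case by (simp add: walk_0_iff kst_dist_def)
next
  case (Suc k)
  obtain w where "walk (Kst_adj s t) u w k" "Kst_adj s t w v"
    using Suc.prems by (rule walk_SucE)
  then show ?case
    using Suc.IH kst_dist_adj[OF assms(1)] kst_dist_triangle[of s u v w] by fastforce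
qed

lemma walk_kst_dist:
  assumes "t \<le> s" and "u < s + t" and "v < s + t"
  shows "walk (Kst_adj s t) u v (kst_dist s u v)"
proof (cases "u = v")
  case True
  then show ?thesis by (simp add: kst_dist_def walk_0_iff)
next
  case False
  let ?E = "Kst_adj s t"
  have down: "walk ?E u (kst_base s u) (of_bool (s \<le> u))"
    using assms by (auto simp: kst_base_def Kst_adj_def walk_0_iff intro!: walk_edge)
  have across: "walk ?E (kst_base s u) (kst_base s v) (of_bool (kst_base s u \<noteq> kst_base s v))"
    using assms by (auto simp: kst_base_def Kst_adj_def walk_0_iff intro!: walk_edge)
  have up: "walk ?E (kst_base s v) v (of_bool (s \<le> v))"
    using assms by (auto simp: kst_base_def Kst_adj_def walk_0_iff intro!: walk_edge)
  show ?thesis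
    using walk_trans[OF walk_trans[OF down across] up] False
    by (simp add: kst_dist_def add.commute)
qed

lemma gdist_Kst:
  assumes "t \<le> s" and "u < s + t" and "v < s + t"
  shows "gdist (Kst_adj s t) u v = kst_dist s u v"
  unfolding gdist_def
  by (rule Least_equality) (use walk_kst_dist[OF assms] kst_dist_le_walk[OF assms(1)] in auto)

definition pair_char :: "real \<Rightarrow> real" where
  "pair_char x = x\<^sup>2 + 4 * x + 2"

lemma pair_char_factor: "pair_char x = (x + 2 - sqrt 2) * (x + 2 + sqrt 2)"
  by (simp add: pair_char_def algebra_simps power2_eq_square)

definition pendant_ind :: "nat \<Rightarrow> nat \<Rightarrow> real" where
  "pendant_ind s i = (if s \<le> i then 1 else 0)"

definition kst_local_mat :: "nat \<Rightarrow> nat \<Rightarrow> real \<Rightarrow> real mat" where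
  "kst_local_mat s t x = mat (s + t) (s + t) (\<lambda>(i, j).
     if i = j then x + 1 + 2 * pendant_ind s i
     else if kst_base s i = kst_base s j then 1 else 0)"

definition kst_rank2_left :: "nat \<Rightarrow> nat \<Rightarrow> real mat" where
  "kst_rank2_left s t = mat (s + t) 2 (\<lambda>(i, c). if c = 0 then 1 else pendant_ind s i)"

definition kst_rank2_right :: "nat \<Rightarrow> nat \<Rightarrow> real mat" where
  "kst_rank2_right s t = mat 2 (s + t) (\<lambda>(c, j). if c = 0 then 1 + pendant_ind s j else 1)"

(* The entries come from the inverses (x+3, -1; -1, x+1) / pair_char x of the 2 x 2 blocks
   of kst_local_mat. *)
definition kst_rank2_solution :: "nat \<Rightarrow> nat \<Rightarrow> real \<Rightarrow> real mat" where
  "kst_rank2_solution s t x = mat (s + t) 2 (\<lambda>(i, c).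
     if c = 0 then (if i < t then (x + 2) / pair_char x else if i < s then 1 / (x + 1) else x / pair_char x)
     else (if i < t then - 1 / pair_char x else if i < s then 0 else (x + 1) / pair_char x))"

lemma char_mat_Kst_split:
  assumes "t \<le> s"
  shows "x \<cdot>\<^sub>m 1\<^sub>m (s + t) - dist_mat_Kst s t
    = kst_local_mat s t x - kst_rank2_left s t * kst_rank2_right s t"
  by (rule eq_matI)
    (auto simp: assms dist_mat_Kst_def kst_local_mat_def kst_rank2_left_def kst_rank2_right_def
      gdist_Kst kst_dist_def pendant_ind_def scalar_prod_def numeral_2_eq_2)

lemma kst_local_mat_row_sum:
  assumes "t \<le> s" and "i < s + t"
  shows "(\<Sum>j<s + t. kst_local_mat s t x $$ (i, j) * f j)
    = (x + 1 + 2 * pendant_ind s i) * f i + (if i < t then f (s + i) else if s \<le> i then f (i - s) else 0)"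
proof -
  let ?P = "{j. j < s + t \<and> j \<noteq> i \<and> kst_base s i = kst_base s j}"
  have P: "?P = (if i < t then {s + i} else if s \<le> i then {i - s} else {})"
    using assms by (auto simp: kst_base_def)
  have "(\<Sum>j<s + t. kst_local_mat s t x $$ (i, j) * f j)
      = (\<Sum>j<s + t. (if j = i then (x + 1 + 2 * pendant_ind s i) * f j else 0)
                    + (if j \<in> ?P then f j else 0))"
    using assms(2) by (intro sum.cong) (auto simp: kst_local_mat_def)
  also have "\<dots> = (x + 1 + 2 * pendant_ind s i) * f i + sum f ?P"
    using assms(2) by (simp add: sum.distrib sum.inter_filter[symmetric] lessThan_def)
  finally show ?thesis unfolding P by simp
qed

lemma kst_local_mat_mult_solution:
  assumes "t \<le> s" and "x + 1 \<noteq> 0" and "pair_char x \<noteq> 0"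
  shows "kst_local_mat s t x * kst_rank2_solution s t x = kst_rank2_left s t"
proof (rule eq_matI)
  fix i c assume "i < dim_row (kst_rank2_left s t)" and "c < dim_col (kst_rank2_left s t)"
  then have i: "i < s + t" and c: "c < 2" by (simp_all add: kst_rank2_left_def)
  have "(kst_local_mat s t x * kst_rank2_solution s t x) $$ (i, c)
      = (\<Sum>j<s + t. kst_local_mat s t x $$ (i, j) * kst_rank2_solution s t x $$ (j, c))"
    using i c by (simp add: kst_local_mat_def kst_rank2_solution_def kst_rank2_left_def
        scalar_prod_def atLeast0LessThan)
  also have "\<dots> = kst_rank2_left s t $$ (i, c)"
    using assms i c unfolding kst_local_mat_row_sum[OF assms(1) i]
    by (auto simp: kst_rank2_solution_def kst_rank2_left_def pendant_ind_def field_simps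
        less_Suc_eq numeral_2_eq_2) (auto simp: pair_char_def algebra_simps power2_eq_square)
  finally show "(kst_local_mat s t x * kst_rank2_solution s t x) $$ (i, c)
      = kst_rank2_left s t $$ (i, c)" .
qed (auto simp: kst_local_mat_def kst_rank2_left_def kst_rank2_solution_def)

lemma det_kst_local_mat:
  assumes "t \<le> s" and "x + 1 \<noteq> 0"
  shows "det (kst_local_mat s t x) = (x + 1) ^ (s - t) * pair_char x ^ t"
proof -
  define E :: "real mat" where "E = mat s t (\<lambda>(i, j). if i = j then 1 else 0)"
  define Y where "Y = (1 / (x + 1)) \<cdot>\<^sub>m E"
  have E: "E \<in> carrier_mat s t" and Y: "Y \<in> carrier_mat s t"
    by (auto simp: E_def Y_def)
  have blocks: "kst_local_mat s t x
      = four_block_mat ((x + 1) \<cdot>\<^sub>m 1\<^sub>m s) E (transpose_mat E) ((x + 3) \<cdot>\<^sub>m 1\<^sub>m t)"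
    using assms(1) by (intro eq_matI) (auto simp: kst_local_mat_def E_def kst_base_def pendant_ind_def)
  have solve: "(x + 1) \<cdot>\<^sub>m 1\<^sub>m s * Y = E"
    using assms(2) E by (intro eq_matI) (auto simp: Y_def)
  have "transpose_mat E * E = 1\<^sub>m t"
    using assms(1) by (intro eq_matI)
      (auto simp: E_def scalar_prod_def if_distrib[of "\<lambda>a. a * _"] cong: if_cong)
  moreover have "transpose_mat E * Y = (1 / (x + 1)) \<cdot>\<^sub>m (transpose_mat E * E)"
    unfolding Y_def using E by (intro mult_smult_distrib) auto
  ultimately have schur:
    "(x + 3) \<cdot>\<^sub>m 1\<^sub>m t - transpose_mat E * Y = (pair_char x / (x + 1)) \<cdot>\<^sub>m 1\<^sub>m t"
    using assms by (intro eq_matI) (auto simp: pair_char_def field_simps power2_eq_square)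
  have "det (kst_local_mat s t x)
      = det ((x + 1) \<cdot>\<^sub>m 1\<^sub>m s) * det ((x + 3) \<cdot>\<^sub>m 1\<^sub>m t - transpose_mat E * Y)"
    unfolding blocks by (rule det_four_block_mat_schur[OF _ E _ _ Y solve]) (use E in auto)
  also have "\<dots> = (x + 1) ^ s * (pair_char x / (x + 1)) ^ t"
    unfolding schur by (simp add: det_smult)
  also have "\<dots> = (x + 1) ^ (s - t) * pair_char x ^ t"
    using assms by (simp add: power_divide power_diff field_simps)
  finally show ?thesis .
qed

definition kst_cubic :: "nat \<Rightarrow> nat \<Rightarrow> real \<Rightarrow> real" where
  "kst_cubic s t x = x ^ 3 + (5 - real s - 3 * real t) * x ^ 2
     + (6 - 4 * real s - 2 * real t - real s * real t) * x + 2 - 2 * real s - real s * real t"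

lemma sum_three_classes:
  fixes g :: "nat \<Rightarrow> real"
  assumes "t \<le> s" and "\<And>j. j < t \<Longrightarrow> g j = a"
    and "\<And>j. t \<le> j \<Longrightarrow> j < s \<Longrightarrow> g j = b"
    and "\<And>j. s \<le> j \<Longrightarrow> j < s + t \<Longrightarrow> g j = c"
  shows "(\<Sum>j<s + t. g j) = real t * a + real (s - t) * b + real t * c"
proof -
  have "(\<Sum>j<s + t. g j) = sum g {0..<t} + sum g {t..<s} + sum g {s..<s + t}"
    using assms(1) by (simp add: atLeast0LessThan[symmetric] sum.atLeastLessThan_concat)
  also have "\<dots> = real t * a + real (s - t) * b + real t * c"
    using assms(2-4) by simp
  finally show ?thesis .
qed

lemma rank2_correction_cubic:
  fixes x q a b :: real
  assumes x: "x + 1 \<noteq> 0" and q: "q \<noteq> 0" and q_def: "q = x\<^sup>2 + 4 * x + 2"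
  shows "(x + 1) * q * ((1 - (a * ((x + 2) / q) + b / (x + 1) + a * (2 * x / q)))
        * (1 - (a * (- 1 / q) + a * ((x + 1) / q)))
      - (a * (- 1 / q) + a * (2 * (x + 1) / q))
        * (a * ((x + 2) / q) + b / (x + 1) + a * (x / q))) = x ^ 3 + (5 - (a + b) - 3 * a) * x ^ 2
      + (6 - 4 * (a + b) - 2 * a - (a + b) * a) * x + 2 - 2 * (a + b) - (a + b) * a"
    (is "_ = ?cubic")
proof -
  define A where "A = (x + 1) * q - b * q - a * (3 * x + 2) * (x + 1)"
  define D where "D = b * q + 2 * a * (x + 1)\<^sup>2"
  have h1: "1 - (a * ((x + 2) / q) + b / (x + 1) + a * (2 * x / q)) = A / ((x + 1) * q)"
    using x q unfolding A_def by (simp add: divide_simps) (simp add: algebra_simps)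
  have h2: "1 - (a * (- 1 / q) + a * ((x + 1) / q)) = (q - a * x) / q"
    using q by (simp add: field_simps)
  have h3: "a * (- 1 / q) + a * (2 * (x + 1) / q) = a * (2 * x + 1) / q"
    using q by (simp add: field_simps)
  have h4: "a * ((x + 2) / q) + b / (x + 1) + a * (x / q) = D / ((x + 1) * q)"
    using x q unfolding D_def by (simp add: divide_simps) (simp add: algebra_simps power2_eq_square)
  have N: "A * (q - a * x) - a * (2 * x + 1) * D = q * ?cubic"
    unfolding A_def D_def q_def by (simp add: algebra_simps power2_eq_square power3_eq_cube)
  have "(x + 1) * q * (A / ((x + 1) * q) * ((q - a * x) / q) - a * (2 * x + 1) / q * (D / ((x + 1) * q)))
      = (A * (q - a * x) - a * (2 * x + 1) * D) / q"
    using x q by (simp add: divide_simps)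
  then show ?thesis
    unfolding h1 h2 h3 h4 N using q by simp
qed

lemma det_one_minus_rank2_product:
  assumes "t \<le> s" and "x + 1 \<noteq> 0" and "pair_char x \<noteq> 0"
  shows "(x + 1) * pair_char x * det (1\<^sub>m 2 - kst_rank2_right s t * kst_rank2_solution s t x)
    = kst_cubic s t x"
proof -
  let ?VY = "kst_rank2_right s t * kst_rank2_solution s t x"
  let ?q = "pair_char x"
  have VY: "?VY $$ (c, d) = (\<Sum>j<s + t. kst_rank2_right s t $$ (c, j) * kst_rank2_solution s t x $$ (j, d))"
    if "c < 2" "d < 2" for c d
    using that by (simp add: kst_rank2_right_def kst_rank2_solution_def scalar_prod_def atLeast0LessThan)
  have e00: "?VY $$ (0, 0) = real t * ((x + 2) / ?q) + real (s - t) * (1 / (x + 1)) + real t * (2 * x / ?q)"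
    by (rule trans[OF VY], simp, simp, rule sum_three_classes[OF assms(1)])
      (use assms(1) in \<open>auto simp: kst_rank2_right_def kst_rank2_solution_def pendant_ind_def\<close>)
  have e01: "?VY $$ (0, 1) = real t * (- 1 / ?q) + real (s - t) * 0 + real t * (2 * (x + 1) / ?q)"
    by (rule trans[OF VY], simp, simp, rule sum_three_classes[OF assms(1)])
      (use assms(1) in \<open>auto simp: kst_rank2_right_def kst_rank2_solution_def pendant_ind_def\<close>)
  have e10: "?VY $$ (1, 0) = real t * ((x + 2) / ?q) + real (s - t) * (1 / (x + 1)) + real t * (x / ?q)"
    by (rule trans[OF VY], simp, simp, rule sum_three_classes[OF assms(1)])
      (use assms(1) in \<open>auto simp: kst_rank2_right_def kst_rank2_solution_def pendant_ind_def\<close>)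
  have e11: "?VY $$ (1, 1) = real t * (- 1 / ?q) + real (s - t) * 0 + real t * ((x + 1) / ?q)"
    by (rule trans[OF VY], simp, simp, rule sum_three_classes[OF assms(1)])
      (use assms(1) in \<open>auto simp: kst_rank2_right_def kst_rank2_solution_def pendant_ind_def\<close>)
  have "det (1\<^sub>m 2 - ?VY) = (1 - ?VY $$ (0, 0)) * (1 - ?VY $$ (1, 1)) - ?VY $$ (0, 1) * ?VY $$ (1, 0)"
    by (subst det_mat_2) (auto simp: kst_rank2_right_def kst_rank2_solution_def)
  also have "\<dots> = (1 - (real t * ((x + 2) / ?q) + real (s - t) / (x + 1) + real t * (2 * x / ?q)))
        * (1 - (real t * (- 1 / ?q) + real t * ((x + 1) / ?q)))
      - (real t * (- 1 / ?q) + real t * (2 * (x + 1) / ?q))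
        * (real t * ((x + 2) / ?q) + real (s - t) / (x + 1) + real t * (x / ?q))"
    (is "_ = ?R") unfolding e00 e01 e10 e11 by simp
  finally show ?thesis
    using rank2_correction_cubic[OF assms(2,3) pair_char_def, of "real t" "real (s - t)"] assms(1)
    by (simp add: kst_cubic_def of_nat_diff)
qed

lemma PD_Kst_off_roots:
  assumes "t \<le> s" and "x + 1 \<noteq> 0" and "pair_char x \<noteq> 0"
  shows "(x + 1) * pair_char x * PD_Kst s t x = (x + 1) ^ (s - t) * pair_char x ^ t * kst_cubic s t x"
proof -
  have "PD_Kst s t x = det (kst_local_mat s t x - kst_rank2_left s t * kst_rank2_right s t)"
    unfolding PD_Kst_def char_mat_Kst_split[OF assms(1)] ..
  also have "\<dots> = det (kst_local_mat s t x)
      * det (1\<^sub>m 2 - kst_rank2_right s t * kst_rank2_solution s t x)"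
    by (rule det_minus_mult[OF _ _ _ _ kst_local_mat_mult_solution[OF assms]])
      (auto simp: kst_local_mat_def kst_rank2_left_def kst_rank2_right_def kst_rank2_solution_def)
  finally show ?thesis
    using det_kst_local_mat[OF assms(1,2)] det_one_minus_rank2_product[OF assms] by simp
qed

lemma isCont_PD_Kst: "isCont (PD_Kst s t) x"
proof -
  have "PD_Kst s t = poly (char_poly (dist_mat_Kst s t))"
  proof
    fix y
    have "- char_matrix (dist_mat_Kst s t) y = y \<cdot>\<^sub>m 1\<^sub>m (s + t) - dist_mat_Kst s t"
      by (rule eq_matI) (auto simp: char_matrix_def dist_mat_Kst_def)
    then show "PD_Kst s t y = poly (char_poly (dist_mat_Kst s t)) y"
      unfolding PD_Kst_def by (simp add: char_poly_matrix[of _ "s + t"] dist_mat_Kst_def)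
  qed
  then show ?thesis by simp
qed

lemma PD_Kst_eqI:
  assumes "\<And>y. y + 1 \<noteq> 0 \<Longrightarrow> pair_char y \<noteq> 0 \<Longrightarrow> PD_Kst s t y = f y"
    and "isCont f x"
  shows "PD_Kst s t x = f x"
proof (rule isCont_eq_off_finite[OF _ _ isCont_PD_Kst assms(2)])
  show "finite {-1, -2 + sqrt 2, -2 - sqrt 2}" by simp
  show "PD_Kst s t y = f y" if "y \<notin> {-1, -2 + sqrt 2, -2 - sqrt 2}" for y
    using that by (intro assms(1)) (auto simp: pair_char_factor)
qed

lemma PD_Kst_unbalanced:
  assumes "0 < t" and "t < s"
  shows "PD_Kst s t x = (x + 1) ^ (s - t - 1) * pair_char x ^ (t - 1) * kst_cubic s t x"
proof (rule PD_Kst_eqI)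
  fix y :: real assume y: "y + 1 \<noteq> 0" "pair_char y \<noteq> 0"
  obtain k m where k: "t = Suc k" and m: "s - t = Suc m"
    using assms by (metis Suc_pred zero_less_diff)
  have "(y + 1) * pair_char y * PD_Kst s t y
      = (y + 1) * pair_char y * ((y + 1) ^ m * pair_char y ^ k * kst_cubic s t y)"
    using PD_Kst_off_roots[of t s y] assms y unfolding m by (simp add: k ac_simps)
  moreover have "s - t - 1 = m" using m by simp
  ultimately show "PD_Kst s t y = (y + 1) ^ (s - t - 1) * pair_char y ^ (t - 1) * kst_cubic s t y"
    using y by (simp add: k)
qed (simp add: pair_char_def kst_cubic_def)

lemma PD_Kst_balanced:
  assumes "0 < t"
  shows "PD_Kst t t x = pair_char x ^ (t - 1) * (x ^ 2 + (4 - 4 * real t) * x + 2 - 2 * real t - (real t) ^ 2)"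
proof (rule PD_Kst_eqI)
  fix y :: real assume y: "y + 1 \<noteq> 0" "pair_char y \<noteq> 0"
  obtain k where k: "t = Suc k" using assms by (cases t) auto
  let ?quad = "y ^ 2 + (4 - 4 * real t) * y + 2 - 2 * real t - (real t) ^ 2"
  have "kst_cubic t t y = (y + 1) * ?quad"
    by (simp add: kst_cubic_def algebra_simps power2_eq_square power3_eq_cube)
  then have "(y + 1) * pair_char y * PD_Kst t t y = (y + 1) * pair_char y * (pair_char y ^ k * ?quad)"
    using PD_Kst_off_roots[of t t y] y by (simp add: k ac_simps)
  then show "PD_Kst t t y = pair_char y ^ (t - 1) * ?quad"
    using y by (simp add: k)
qed (simp add: pair_char_def)

theorem lemma3p1:
  fixes s t :: nat and x :: real
  assumes "2 \<le> t" and "t \<le> s"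
  shows "(s \<ge> t + 1 \<longrightarrow>
           PD_Kst s t x = (x + 1) ^ (s - t - 1) * (x + 2 - sqrt 2) ^ (t - 1)
             * (x + 2 + sqrt 2) ^ (t - 1)
             * (x ^ 3 + (5 - real s - 3 * real t) * x ^ 2
                + (6 - 4 * real s - 2 * real t - real s * real t) * x
                + 2 - 2 * real s - real s * real t)) \<and>
         (s = t \<longrightarrow>
           PD_Kst s t x = (x + 2 - sqrt 2) ^ (t - 1) * (x + 2 + sqrt 2) ^ (t - 1)
             * (x ^ 2 + (4 - 4 * real t) * x + 2 - 2 * real t - (real t) ^ 2))"
proof -
  have roots: "(x + 2 - sqrt 2) ^ k * (x + 2 + sqrt 2) ^ k = pair_char x ^ k" for k
    by (simp add: pair_char_factor power_mult_distrib)
  have "0 < t" using assms(1) by simp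
  then show ?thesis
    using PD_Kst_unbalanced[of t s x] PD_Kst_balanced[of t x] roots[of "t - 1"]
    by (auto simp: kst_cubic_def mult.assoc)
qed

end
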